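(* Let $k,d,h$ be positive integers and let $C_h$ be a chain of size $h$. If $\mathcal{F}\subset[k]^d$ does not contain a strong copy of $C_h$, then $|\mathcal{F}|\le d(h-1)k^{d-1}$.
   Context: $[k]^d=\{1,\dots,k\}^d$ with the coordinatewise order $\preceq$. For a poset $Q$, a set $Q'\subset[k]^n$ is a strong copy of $Q$ if it is an induced copy of $Q$ (there is a bijection $\pi:Q\to Q'$ with $x\le_Q y\iff \pi(x)\preceq\pi(y)$) and moreover whenever $\mathbf x,\mathbf y\in Q'$ with $\mathbf x\prec\mathbf y$, we have $\mathbf x(i)<\mathbf y(i)$ for every coordinate $i\in[n]$ (incomparable pairs may share coordinates). *)

theory Defs
  imports "HOL-Library.FuncSet"
begin

definition grid :: "nat \<Rightarrow> nat \<Rightarrow> (nat \<Rightarrow> nat) set" where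
  "grid k d = PiE {..<d} (\<lambda>_. {1..k})"

definition cw_le :: "nat \<Rightarrow> (nat \<Rightarrow> nat) \<Rightarrow> (nat \<Rightarrow> nat) \<Rightarrow> bool" where
  "cw_le d x y = (\<forall>i<d. x i \<le> y i)"

definition strong_copy :: "nat \<Rightarrow> 'a set \<Rightarrow> ('a \<Rightarrow> 'a \<Rightarrow> bool) \<Rightarrow> (nat \<Rightarrow> nat) set \<Rightarrow> bool" where
  "strong_copy d Q leQ Q' =
     ((\<exists>\<pi>. bij_betw \<pi> Q Q' \<and> (\<forall>x\<in>Q. \<forall>y\<in>Q. leQ x y \<longleftrightarrow> cw_le d (\<pi> x) (\<pi> y))) \<and>
      (\<forall>x\<in>Q'. \<forall>y\<in>Q'. cw_le d x y \<and> x \<noteq> y \<longrightarrow> (\<forall>i<d. x i < y i)))"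

definition chain_poset :: "nat \<Rightarrow> nat set" where
  "chain_poset h = {..<h}"

end

theory Submission
  imports Defs "HOL-Library.Infinite_Set"
begin

text \<open>Cover [k]^d by the diagonal lines through the points whose minimal coordinate is 1.
  Every point is \<open>b + s\<cdot>(1,\<dots>,1)\<close> for such a base point \<open>b\<close> and some shift \<open>s\<close>; there are at most
  d k^(d-1) base points, as one coordinate of \<open>b\<close> equals 1. Distinct points on a
  diagonal line differ in every coordinate and are totally ordered, so any \<open>h\<close> of them form a
  strong copy of \<open>C\<^sub>h\<close>; hence each line meets \<open>F\<close> in at most \<open>h - 1\<close> points.\<close>

definition diag_shift :: "nat \<Rightarrow> (nat \<Rightarrow> nat) \<Rightarrow> nat \<Rightarrow> nat \<Rightarrow> nat" where
  "diag_shift d b s = (\<lambda>i. if i < d then b i + s else undefined)"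

definition min_coord :: "nat \<Rightarrow> (nat \<Rightarrow> nat) \<Rightarrow> nat" where
  "min_coord d x = Min (x ` {..<d})"

definition diag_base :: "nat \<Rightarrow> (nat \<Rightarrow> nat) \<Rightarrow> nat \<Rightarrow> nat" where
  "diag_base d x = (\<lambda>i. if i < d then x i + 1 - min_coord d x else undefined)"

definition grid_face :: "nat \<Rightarrow> nat \<Rightarrow> nat \<Rightarrow> (nat \<Rightarrow> nat) set" where
  "grid_face k d j = PiE {..<d} (\<lambda>i. if i = j then {1} else {1..k})"

lemma card_le_card_image_mult:
  assumes "finite A" and "\<And>y. y \<in> f ` A \<Longrightarrow> card {x\<in>A. f x = y} \<le> m"
  shows "card A \<le> card (f ` A) * m"
proof -
  have "card A = card (\<Union>y\<in>f ` A. {x\<in>A. f x = y})"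
    by (rule arg_cong[where f = card]) auto
  also have "\<dots> \<le> (\<Sum>y\<in>f ` A. card {x\<in>A. f x = y})"
    by (rule card_UN_le) (use assms(1) in simp)
  also have "\<dots> \<le> card (f ` A) * m"
    using sum_bounded_above[of "f ` A" "\<lambda>y. card {x\<in>A. f x = y}" m] assms(2) by simp
  finally show ?thesis .
qed

lemma cw_le_diag_shift_iff:
  "d > 0 \<Longrightarrow> cw_le d (diag_shift d b s) (diag_shift d b t) \<longleftrightarrow> s \<le> t"
  unfolding cw_le_def diag_shift_def by auto

lemma inj_diag_shift: "d > 0 \<Longrightarrow> inj (diag_shift d b)"
  by (rule injI) (metis cw_le_diag_shift_iff le_antisym order_refl)

lemma strong_copy_chain_diag_shift:
  assumes "d > 0" and "finite S"
  shows "strong_copy d (chain_poset (card S)) (\<le>) (diag_shift d b ` S)"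
proof -
  obtain e where e: "bij_betw e {..<card S} S" "strict_mono_on {..<card S} e"
    using ex_bij_betw_strict_mono_card[OF assms(2)] by blast
  have e_mono_iff: "x \<le> y \<longleftrightarrow> e x \<le> e y" if "x < card S" "y < card S" for x y
  proof
    show "x \<le> y \<Longrightarrow> e x \<le> e y"
      using e(2) that by (metis le_less lessThan_iff strict_mono_onD)
    show "e x \<le> e y \<Longrightarrow> x \<le> y"
      using e(2) that by (metis not_le lessThan_iff strict_mono_onD)
  qed
  have "bij_betw (diag_shift d b \<circ> e) {..<card S} (diag_shift d b ` S)"
    using bij_betw_trans[OF e(1)] inj_diag_shift[OF assms(1)]
    by (metis bij_betw_imageI inj_on_subset subset_UNIV)
  moreover have "\<forall>x\<in>{..<card S}. \<forall>y\<in>{..<card S}.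
      x \<le> y \<longleftrightarrow> cw_le d ((diag_shift d b \<circ> e) x) ((diag_shift d b \<circ> e) y)"
    using e_mono_iff cw_le_diag_shift_iff[OF assms(1)] by simp
  moreover have "\<forall>i<d. x i < y i"
    if "x \<in> diag_shift d b ` S" "y \<in> diag_shift d b ` S" "cw_le d x y" "x \<noteq> y" for x y
    using that cw_le_diag_shift_iff[OF assms(1)] by (auto simp: diag_shift_def)
  ultimately show ?thesis
    unfolding strong_copy_def chain_poset_def by blast
qed

lemma card_diag_line_le:
  assumes "d > 0" and "finite F"
    and "\<not> (\<exists>Q'\<subseteq>F. strong_copy d (chain_poset h) (\<le>) Q')"
  shows "card {s. diag_shift d b s \<in> F} \<le> h - 1"
proof (rule ccontr)
  let ?S = "{s. diag_shift d b s \<in> F}"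
  have "finite ?S"
    using finite_vimageI[OF assms(2) inj_diag_shift[OF assms(1)]] by (simp add: vimage_def)
  assume "\<not> card ?S \<le> h - 1"
  then have "h \<le> card ?S" by linarith
  then obtain T where T: "T \<subseteq> ?S" "card T = h"
    by (rule obtain_subset_with_card_n)
  with \<open>finite ?S\<close> have "finite T" using finite_subset by blast
  then have "strong_copy d (chain_poset h) (\<le>) (diag_shift d b ` T)"
    using strong_copy_chain_diag_shift[OF assms(1)] T(2) by blast
  moreover have "diag_shift d b ` T \<subseteq> F" using T(1) by auto
  ultimately show False using assms(3) by blast
qed

lemma grid_memD:
  assumes "x \<in> grid k d"
  shows "\<And>i. i < d \<Longrightarrow> 1 \<le> x i \<and> x i \<le> k" and "\<And>i. \<not> i < d \<Longrightarrow> x i = undefined"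
  using assms by (auto simp: grid_def PiE_iff extensional_def)

lemma min_coord_grid:
  assumes "d > 0" and "x \<in> grid k d"
  shows "\<forall>i<d. min_coord d x \<le> x i" and "\<exists>j<d. x j = min_coord d x" and "min_coord d x \<ge> 1"
proof -
  have "min_coord d x \<in> x ` {..<d}"
    unfolding min_coord_def using assms(1) by (intro Min_in) auto
  then show min_attained: "\<exists>j<d. x j = min_coord d x" by auto
  show "\<forall>i<d. min_coord d x \<le> x i" unfolding min_coord_def by simp
  from min_attained show "min_coord d x \<ge> 1"
    using grid_memD(1)[OF assms(2)] by metis
qed

lemma diag_shift_diag_base:
  assumes "d > 0" and "x \<in> grid k d"
  shows "diag_shift d (diag_base d x) (min_coord d x - 1) = x"
proof
  fix i
  show "diag_shift d (diag_base d x) (min_coord d x - 1) i = x i"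
  proof (cases "i < d")
    case True
    then have "min_coord d x \<le> x i" "1 \<le> min_coord d x" using min_coord_grid[OF assms] by auto
    with True show ?thesis by (simp add: diag_shift_def diag_base_def)
  next
    case False
    then show ?thesis using grid_memD(2)[OF assms(2)] by (simp add: diag_shift_def)
  qed
qed

lemma diag_base_in_grid_face:
  assumes "d > 0" and "x \<in> grid k d"
  shows "\<exists>j<d. diag_base d x \<in> grid_face k d j"
proof -
  obtain j where j: "j < d" "x j = min_coord d x" using min_coord_grid[OF assms] by blast
  have "diag_base d x i \<in> (if i = j then {1} else {1..k})" if "i < d" for i
    using that j grid_memD(1)[OF assms(2) that] min_coord_grid[OF assms]
    by (auto simp: diag_base_def)
  then have "diag_base d x \<in> grid_face k d j"
    by (auto simp: grid_face_def PiE_iff extensional_def diag_base_def)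
  with j(1) show ?thesis by blast
qed
lemma finite_grid: "finite (grid k d)"
  by (simp add: grid_def finite_PiE)

lemma card_grid_face: "card (grid_face k d j) = k ^ (d - 1)" if "j < d"
proof -
  have "card (grid_face k d j) = (\<Prod>i<d. if i = j then 1 else k)"
    by (simp add: grid_face_def card_PiE if_distrib cong: if_cong)
  also have "\<dots> = (\<Prod>i\<in>{..<d} - {j}. k)"
    using that by (subst prod.remove[of _ j]) auto
  finally show ?thesis using that by simp
qed

lemma card_diag_base_image:
  assumes "d > 0" and "F \<subseteq> grid k d"
  shows "card (diag_base d ` F) \<le> d * k ^ (d - 1)"
proof -
  have "diag_base d ` F \<subseteq> (\<Union>j<d. grid_face k d j)"
    using diag_base_in_grid_face[OF assms(1)] assms(2) by blast
  then have "card (diag_base d ` F) \<le> card (\<Union>j<d. grid_face k d j)"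
    by (intro card_mono) (auto simp: grid_face_def finite_PiE)
  also have "\<dots> \<le> (\<Sum>j<d. card (grid_face k d j))" by (rule card_UN_le) simp
  also have "\<dots> = d * k ^ (d - 1)" by (simp add: card_grid_face)
  finally show ?thesis .
qed

lemma card_diag_base_fiber_le:
  assumes "d > 0" and "F \<subseteq> grid k d"
    and "\<not> (\<exists>Q'\<subseteq>F. strong_copy d (chain_poset h) (\<le>) Q')"
  shows "card {x\<in>F. diag_base d x = b} \<le> h - 1"
proof -
  have "finite F" using assms(2) finite_grid by (rule finite_subset)
  have "finite {s. diag_shift d b s \<in> F}"
    using finite_vimageI[OF \<open>finite F\<close> inj_diag_shift[OF assms(1)]] by (simp add: vimage_def)
  have "{x\<in>F. diag_base d x = b} \<subseteq> diag_shift d b ` {s. diag_shift d b s \<in> F}"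
  proof
    fix x assume "x \<in> {x\<in>F. diag_base d x = b}"
    then have "x \<in> F" and "x = diag_shift d b (min_coord d x - 1)"
      using diag_shift_diag_base[OF assms(1)] assms(2) by auto
    then show "x \<in> diag_shift d b ` {s. diag_shift d b s \<in> F}" by (metis imageI mem_Collect_eq)
  qed
  then have "card {x\<in>F. diag_base d x = b} \<le> card (diag_shift d b ` {s. diag_shift d b s \<in> F})"
    using \<open>finite {s. diag_shift d b s \<in> F}\<close> by (intro card_mono) auto
  also have "\<dots> \<le> card {s. diag_shift d b s \<in> F}" by (rule card_image_le) fact
  also have "\<dots> \<le> h - 1" using card_diag_line_le[OF assms(1) \<open>finite F\<close> assms(3)] .
  finally show ?thesis .
qed

theorem lemma3p3:
  fixes k d h :: nat and F :: "(nat \<Rightarrow> nat) set"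
  assumes "k > 0" and "d > 0" and "h > 0"
    and "F \<subseteq> grid k d"
    and "\<not> (\<exists>Q'\<subseteq>F. strong_copy d (chain_poset h) (\<le>) Q')"
  shows "card F \<le> d * (h - 1) * k ^ (d - 1)"
proof -
  have "finite F" using assms(4) finite_grid by (rule finite_subset)
  then have "card F \<le> card (diag_base d ` F) * (h - 1)"
    by (rule card_le_card_image_mult) (rule card_diag_base_fiber_le[OF assms(2,4,5)])
  also have "\<dots> \<le> d * k ^ (d - 1) * (h - 1)"
    using card_diag_base_image[OF assms(2,4)] by simp
  finally show ?thesis by (simp add: algebra_simps)
qed

end
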